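(* Let $G$ be a graph and $v\in V(G)$ with $d_G(v)\le 2$. Then $\mathbf{a}_4(G)\ge \mathbf{a}_4(G-v)$.
   Context: Graphs are finite and simple. $\mathbf{a}_4(H)$ is the coefficient of $\lambda^{\nu(H)-4}$ in $\det(\lambda\mathbf{I}-\mathbf{A}(H))$, where $\nu(H)$ is the number of vertices; equivalently, $\mathbf{a}_4(H)$ is the number of 2-matchings of $H$ minus twice the number of 4-cycles of $H$. $G-v$ is the graph obtained by deleting $v$ and its incident edges. *)

theory Defs
  imports Main
begin

definition simple_graph :: "'a set \<Rightarrow> 'a set set \<Rightarrow> bool" where
  "simple_graph V E \<longleftrightarrow> finite V \<and> (\<forall>e\<in>E. e \<subseteq> V \<and> card e = 2)"

definition degree :: "'a set set \<Rightarrow> 'a \<Rightarrow> nat" where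
  "degree E v = card {e \<in> E. v \<in> e}"

definition del_vertex_V :: "'a set \<Rightarrow> 'a \<Rightarrow> 'a set" where
  "del_vertex_V V v = V - {v}"

definition del_vertex_E :: "'a set set \<Rightarrow> 'a \<Rightarrow> 'a set set" where
  "del_vertex_E E v = {e \<in> E. v \<notin> e}"

definition two_matchings :: "'a set set \<Rightarrow> 'a set set set" where
  "two_matchings E = {{e, f} | e f. e \<in> E \<and> f \<in> E \<and> e \<inter> f = {}}"

definition four_cycles :: "'a set set \<Rightarrow> 'a set set set" where
  "four_cycles E = {{{a, b}, {b, c}, {c, d}, {d, a}} | a b c d.
      distinct [a, b, c, d] \<and> {a, b} \<in> E \<and> {b, c} \<in> E \<and> {c, d} \<in> E \<and> {d, a} \<in> E}"

definition a4 :: "'a set set \<Rightarrow> int" where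
  "a4 E = int (card (two_matchings E)) - 2 * int (card (four_cycles E))"

end

theory Submission
  imports Defs
begin

text \<open>
  Deleting \<open>v\<close> loses exactly the 2-matchings that use an edge at \<open>v\<close> and the 4-cycles
  through \<open>v\<close>, so it suffices to show that at least twice as many 2-matchings as 4-cycles
  are lost. A 4-cycle through \<open>v\<close> uses two edges \<open>vu\<close>, \<open>vw\<close> at \<open>v\<close>; as \<open>v\<close> has degree at
  most 2 these are the only edges at \<open>v\<close>, so every lost 4-cycle is \<open>v u x w\<close> for a common
  neighbour \<open>x \<noteq> v\<close> of \<open>u\<close> and \<open>w\<close>. Each such \<open>x\<close> in turn yields the two lost 2-matchings
  \<open>{vu, xw}\<close> and \<open>{vw, xu}\<close>, and all of these are distinct.
\<close>

lemma finite_edges_if_simple_graph: "simple_graph V E \<Longrightarrow> finite E"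
  unfolding simple_graph_def by (meson Pow_iff finite_Pow_iff finite_subset subsetI)

lemma del_vertex_E_subset: "del_vertex_E E v \<subseteq> E"
  unfolding del_vertex_E_def by blast

lemma two_matchings_mono: "E' \<subseteq> E \<Longrightarrow> two_matchings E' \<subseteq> two_matchings E"
  unfolding two_matchings_def by blast

lemma four_cycles_mono: "E' \<subseteq> E \<Longrightarrow> four_cycles E' \<subseteq> four_cycles E"
  unfolding four_cycles_def by blast

lemma finite_two_matchings: "finite E \<Longrightarrow> finite (two_matchings E)"
  by (rule finite_subset[of _ "Pow E"]) (auto simp: two_matchings_def)

lemma finite_four_cycles: "finite E \<Longrightarrow> finite (four_cycles E)"
  by (rule finite_subset[of _ "Pow E"]) (auto simp: four_cycles_def)

lemma a4_le_a4I:
  assumes "finite E" and "E' \<subseteq> E"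
    and "2 * card (four_cycles E - four_cycles E') \<le> card (two_matchings E - two_matchings E')"
  shows "a4 E' \<le> a4 E"
proof -
  have "card (two_matchings E) = card (two_matchings E') + card (two_matchings E - two_matchings E')"
    using card_Int_Diff[OF finite_two_matchings[OF assms(1)], of "two_matchings E'"] two_matchings_mono[OF assms(2)]
    by (simp add: Int_absorb1)
  moreover have "card (four_cycles E) = card (four_cycles E') + card (four_cycles E - four_cycles E')"
    using card_Int_Diff[OF finite_four_cycles[OF assms(1)], of "four_cycles E'"] four_cycles_mono[OF assms(2)]
    by (simp add: Int_absorb1)
  ultimately show ?thesis
    using assms(3) unfolding a4_def by linarith
qed

lemma four_cycle_through_deleted_vertex:
  assumes "Q \<in> four_cycles E - four_cycles (del_vertex_E E v)"
  obtains b c d where "Q = {{v, b}, {b, c}, {c, d}, {d, v}}" and "distinct [v, b, c, d]"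
    and "{v, b} \<in> E" and "{b, c} \<in> E" and "{c, d} \<in> E" and "{d, v} \<in> E"
proof -
  obtain a b c d where Q: "Q = {{a, b}, {b, c}, {c, d}, {d, a}}" and "distinct [a, b, c, d]"
    and E: "{a, b} \<in> E" "{b, c} \<in> E" "{c, d} \<in> E" "{d, a} \<in> E"
    using assms unfolding four_cycles_def by blast
  moreover have "v \<in> {a, b, c, d}"
    using assms calculation unfolding four_cycles_def del_vertex_E_def by blast
  ultimately consider "v = a" | "v = b" | "v = c" | "v = d"
    by blast
  then show ?thesis
  proof cases
    case 1
    then show ?thesis using that[of b c d] Q E \<open>distinct [a, b, c, d]\<close> by auto
  next
    case 2
    then show ?thesis using that[of c d a] Q E \<open>distinct [a, b, c, d]\<close> by (auto simp: insert_commute)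
  next
    case 3
    then show ?thesis using that[of d a b] Q E \<open>distinct [a, b, c, d]\<close> by (auto simp: insert_commute)
  next
    case 4
    then show ?thesis using that[of a b c] Q E \<open>distinct [a, b, c, d]\<close> by (auto simp: insert_commute)
  qed
qed

definition common_neighbours :: "'a set set \<Rightarrow> 'a \<Rightarrow> 'a \<Rightarrow> 'a set" where
  "common_neighbours E u w = {x. {u, x} \<in> E \<and> {x, w} \<in> E}"

lemma common_neighbours_commute: "common_neighbours E w u = common_neighbours E u w"
  unfolding common_neighbours_def by (auto simp: insert_commute)

lemma finite_common_neighbours:
  assumes "finite E"
  shows "finite (common_neighbours E u w)"
proof (rule finite_imageD)
  show "finite ((\<lambda>x. {u, x}) ` common_neighbours E u w)"
    using assms by (rule finite_subset[rotated]) (auto simp: common_neighbours_def)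
  show "inj_on (\<lambda>x. {u, x}) (common_neighbours E u w)"
    by (auto intro!: inj_onI simp: doubleton_eq_iff)
qed

lemma edges_at_vertex_if_degree_le_2:
  assumes "finite E" and "degree E v \<le> 2" and "{v, u} \<in> E" and "{v, w} \<in> E" and "u \<noteq> w"
  shows "{e \<in> E. v \<in> e} = {{v, u}, {v, w}}"
proof (rule sym, rule card_seteq)
  show "finite {e \<in> E. v \<in> e}"
    using assms(1) by simp
  show "{{v, u}, {v, w}} \<subseteq> {e \<in> E. v \<in> e}"
    using assms(3,4) by simp
  show "card {e \<in> E. v \<in> e} \<le> card {{v, u}, {v, w}}"
    using assms(2,5) by (simp add: degree_def doubleton_eq_iff)
qed

lemma lost_four_cycles_subset:
  assumes "{e \<in> E. v \<in> e} = {{v, u}, {v, w}}" and "u \<noteq> w"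
  shows "four_cycles E - four_cycles (del_vertex_E E v)
    \<subseteq> (\<lambda>x. {{v, u}, {u, x}, {x, w}, {w, v}}) ` (common_neighbours E u w - {v, u, w})"
proof
  fix Q
  assume "Q \<in> four_cycles E - four_cycles (del_vertex_E E v)"
  then obtain b c d where Q: "Q = {{v, b}, {b, c}, {c, d}, {d, v}}" and "distinct [v, b, c, d]"
    and E: "{v, b} \<in> E" "{b, c} \<in> E" "{c, d} \<in> E" "{d, v} \<in> E"
    by (rule four_cycle_through_deleted_vertex)
  have "{v, b} \<in> {e \<in> E. v \<in> e}" and "{v, d} \<in> {e \<in> E. v \<in> e}"
    using E by (auto simp: insert_commute[of d v])
  then have "b = u \<and> d = w \<or> b = w \<and> d = u"
    using assms \<open>distinct [v, b, c, d]\<close> by (auto simp: doubleton_eq_iff)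
  then have "Q = {{v, u}, {u, c}, {c, w}, {w, v}}" and "c \<in> common_neighbours E u w - {v, u, w}"
    using Q E \<open>distinct [v, b, c, d]\<close> by (auto simp: common_neighbours_def insert_commute)
  then show "Q \<in> (\<lambda>x. {{v, u}, {u, x}, {x, w}, {w, v}}) ` (common_neighbours E u w - {v, u, w})"
    by blast
qed

lemma card_lost_four_cycles_le:
  assumes "finite E" and "{e \<in> E. v \<in> e} = {{v, u}, {v, w}}" and "u \<noteq> w"
  shows "card (four_cycles E - four_cycles (del_vertex_E E v))
    \<le> card (common_neighbours E u w - {v, u, w})"
proof -
  have fin: "finite (common_neighbours E u w - {v, u, w})"
    using finite_common_neighbours[OF assms(1)] by blast
  have "card (four_cycles E - four_cycles (del_vertex_E E v))
      \<le> card ((\<lambda>x. {{v, u}, {u, x}, {x, w}, {w, v}}) ` (common_neighbours E u w - {v, u, w}))"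
    by (rule card_mono[OF finite_imageI[OF fin] lost_four_cycles_subset[OF assms(2,3)]])
  also have "\<dots> \<le> card (common_neighbours E u w - {v, u, w})"
    by (rule card_image_le[OF fin])
  finally show ?thesis .
qed

lemma inj_on_insert_edge: "inj_on (\<lambda>x. {e, {x, w}}) (- insert w e)"
proof (rule inj_onI)
  fix x y
  assume "x \<in> - insert w e" and "{e, {x, w}} = {e, {y, w}}"
  then have "x \<in> \<Union>{e, {y, w}}"
    by (metis UnionI insertCI)
  then show "x = y"
    using \<open>x \<in> - insert w e\<close> by auto
qed

lemma two_matching_at_deleted_vertex:
  assumes "e \<in> E" and "f \<in> E" and "e \<inter> f = {}" and "v \<in> e"
  shows "{e, f} \<in> two_matchings E - two_matchings (del_vertex_E E v)"
proof -
  have "{e, f} \<notin> two_matchings (del_vertex_E E v)"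
    using assms(4) unfolding two_matchings_def del_vertex_E_def by (auto simp: doubleton_eq_iff)
  then show ?thesis
    using assms(1-3) unfolding two_matchings_def by blast
qed

lemma lost_two_matchings_through_edge:
  assumes "{v, u} \<in> E" and "distinct [v, u, w]"
  shows "(\<lambda>x. {{v, u}, {x, w}}) ` (common_neighbours E u w - {v, u, w})
    \<subseteq> two_matchings E - two_matchings (del_vertex_E E v)"
proof (rule image_subsetI)
  fix x
  assume "x \<in> common_neighbours E u w - {v, u, w}"
  then show "{{v, u}, {x, w}} \<in> two_matchings E - two_matchings (del_vertex_E E v)"
    using assms by (intro two_matching_at_deleted_vertex) (auto simp: common_neighbours_def)
qed

lemma card_lost_two_matchings_ge:
  assumes "finite E" and "{v, u} \<in> E" and "{v, w} \<in> E" and "distinct [v, u, w]"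
  shows "2 * card (common_neighbours E u w - {v, u, w})
    \<le> card (two_matchings E - two_matchings (del_vertex_E E v))"
proof -
  define X where "X = common_neighbours E u w - {v, u, w}"
  define f where "f x = {{v, u}, {x, w}}" for x
  define g where "g x = {{v, w}, {x, u}}" for x
  have "finite X"
    unfolding X_def using finite_common_neighbours[OF assms(1)] by blast
  have "inj_on f X"
    unfolding f_def by (rule inj_on_subset[OF inj_on_insert_edge]) (auto simp: X_def)
  moreover have "inj_on g X"
    unfolding g_def by (rule inj_on_subset[OF inj_on_insert_edge]) (auto simp: X_def)
  moreover have "f ` X \<inter> g ` X = {}"
  proof -
    have "f x \<noteq> g y" if "y \<in> X" for x y
    proof
      assume "f x = g y"
      then have "{v, u} \<in> {{v, w}, {y, u}}"
        unfolding f_def g_def by (metis insertCI)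
      then show False
        using that assms(4) unfolding X_def by (auto simp: doubleton_eq_iff)
    qed
    then show ?thesis
      by blast
  qed
  ultimately have "card (f ` X \<union> g ` X) = 2 * card X"
    using \<open>finite X\<close> by (simp add: card_Un_disjoint card_image)
  moreover have "f ` X \<union> g ` X \<subseteq> two_matchings E - two_matchings (del_vertex_E E v)"
    using lost_two_matchings_through_edge[OF assms(2,4)]
      lost_two_matchings_through_edge[OF assms(3), of u] assms(4)
    unfolding f_def g_def X_def by (auto simp: common_neighbours_commute insert_commute)
  ultimately show ?thesis
    unfolding X_def by (metis card_mono finite_Diff finite_two_matchings assms(1))
qed

lemma card_lost_four_cycles_le_lost_two_matchings:
  assumes "finite E" and "degree E v \<le> 2"
  shows "2 * card (four_cycles E - four_cycles (del_vertex_E E v))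
    \<le> card (two_matchings E - two_matchings (del_vertex_E E v))"
proof (cases "four_cycles E - four_cycles (del_vertex_E E v) = {}")
  case True
  show ?thesis
    unfolding True by simp
next
  case False
  then obtain Q where "Q \<in> four_cycles E - four_cycles (del_vertex_E E v)"
    by blast
  then obtain b c d where "distinct [v, b, c, d]" and vb: "{v, b} \<in> E" and "{d, v} \<in> E"
    by (rule four_cycle_through_deleted_vertex)
  then have vd: "{v, d} \<in> E" and distinct: "distinct [v, b, d]"
    by (auto simp: insert_commute[of v d])
  then have "{e \<in> E. v \<in> e} = {{v, b}, {v, d}}"
    using edges_at_vertex_if_degree_le_2[OF assms vb vd] by simp
  then have "card (four_cycles E - four_cycles (del_vertex_E E v))
      \<le> card (common_neighbours E b d - {v, b, d})"
    using card_lost_four_cycles_le[OF assms(1)] distinct by simp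
  moreover have "2 * card (common_neighbours E b d - {v, b, d})
      \<le> card (two_matchings E - two_matchings (del_vertex_E E v))"
    using card_lost_two_matchings_ge[OF assms(1) vb vd distinct] .
  ultimately show ?thesis
    by linarith
qed

theorem theorem4p3:
  fixes V :: "'a set" and E :: "'a set set" and v :: 'a
  assumes "simple_graph V E" and "v \<in> V" and "degree E v \<le> 2"
  shows "a4 E \<ge> a4 (del_vertex_E E v)"
proof (rule a4_le_a4I)
  show "finite E"
    using assms(1) by (rule finite_edges_if_simple_graph)
  then show "2 * card (four_cycles E - four_cycles (del_vertex_E E v))
      \<le> card (two_matchings E - two_matchings (del_vertex_E E v))"
    using assms(3) by (rule card_lost_four_cycles_le_lost_two_matchings)
qed (rule del_vertex_E_subset)

end
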